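(* When CTS is run on a CMAB-PTA instance (as in the context), for every $i\in[m]$, every $\bm\mu\in[0,1]^m$ and every $\rho\in(0,1)$, \[ \mathbb{E}\Big[\sum_{t=1}^T\mathbb{I}\{i\in\tilde S(t),\ N_i(t)\le(1-\rho)p_iM_i(t)\}\ \Big|\ \bm\mu\Big]\le 1+\frac{2}{\rho^2p^*}. \]
   Context: CMAB-PTA setting: there are $m$ base arms $[m]$ and a known family $\mathcal{I}\subseteq 2^{[m]}$ of feasible super arms. In each round $t$, the environment draws $\bm X(t)\in[0,1]^m$ from an unknown distribution $D=D_1\times\cdots\times D_m$ independently across rounds, with mean vector $\bm\mu$. The learner selects $S(t)\in\mathcal{I}$; the triggered set $S'(t)\supseteq S(t)$ is drawn as $S'(t)\sim D^{\mathrm{trig}}(S(t),\bm X(t))$; the learner observes $\{(i,X_i(t)):i\in S'(t)\}$. $p_i^S$ is the probability that arm $i$ is triggered when $S$ is selected; $\tilde S=\{i:p_i^S>0\}$; $\tilde S(t)$ denotes the triggering set of $S(t)$; $p_i=\min_{S\in\mathcal{I}:i\in\tilde S}p_i^S$, $p^*=\min_i p_i>0$. Counters: $M_i(t)=\sum_{\tau=1}^{t-1}\mathbb{I}\{i\in\tilde S(\tau)\}$, $N_i(t)=\sum_{\tau=1}^{t-1}\mathbb{I}\{i\in S'(\tau)\}$. CTS: with an exact oracle returning $\mathrm{Oracle}(\bm\theta)\in\arg\max_{S\in\mathcal{I}}r(S,\bm\theta)$, where $r(S,\bm\mu)$ is the expected reward of $S$; initialize $a_i=b_i=1$; each round draw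 $\theta_i(t)\sim\mathrm{Beta}(a_i,b_i)$ independently, select $S(t)=\mathrm{Oracle}(\bm\theta(t))$, and for each observed $(i,X_i)$ draw $Y_i\sim\mathrm{Bernoulli}(X_i)$ and update $a_i\leftarrow a_i+Y_i$, $b_i\leftarrow b_i+1-Y_i$. *)

theory Defs
  imports "HOL-Probability.Probability"
begin

text \<open>Arms are 0..<m. A round record is (S, S', Y) where S is the selected super arm,
  S' the triggered set and Y the set of observed arms whose Bernoulli draw Y_i was 1.\<close>

type_synonym rnd = "nat set \<times> nat set \<times> nat set"

definition beta_pdf :: "nat \<Rightarrow> nat \<Rightarrow> real \<Rightarrow> real" where
  "beta_pdf a b x = (if 0 < x \<and> x < 1
     then fact (a + b - 1) / (fact (a - 1) * fact (b - 1)) * x ^ (a - 1) * (1 - x) ^ (b - 1)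
     else 0)"

definition beta_measure :: "nat \<Rightarrow> nat \<Rightarrow> real measure" where
  "beta_measure a b = density lborel (\<lambda>x. ennreal (beta_pdf a b x))"

text \<open>Beta posterior parameters a_i, b_i after history h (oldest round first).\<close>
definition cts_a :: "rnd list \<Rightarrow> nat \<Rightarrow> nat" where
  "cts_a h i = Suc (length (filter (\<lambda>(S, S', Y). i \<in> S' \<and> i \<in> Y) h))"

definition cts_b :: "rnd list \<Rightarrow> nat \<Rightarrow> nat" where
  "cts_b h i = Suc (length (filter (\<lambda>(S, S', Y). i \<in> S' \<and> i \<notin> Y) h))"

definition obs_pmf :: "(nat set \<Rightarrow> (nat \<Rightarrow> real) \<Rightarrow> nat set pmf) \<Rightarrow> nat set \<Rightarrow> (nat \<Rightarrow> real)
    \<Rightarrow> (nat set \<times> nat set) pmf" where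
  "obs_pmf Dtrig S X = bind_pmf (Dtrig S X)
     (\<lambda>S'. map_pmf (\<lambda>Yf. (S', {j. Yf j})) (Pi_pmf S' False (\<lambda>j. bernoulli_pmf (X j))))"

definition cts_round :: "nat \<Rightarrow> (nat \<Rightarrow> real measure) \<Rightarrow> (nat set \<Rightarrow> (nat \<Rightarrow> real) \<Rightarrow> nat set pmf)
    \<Rightarrow> ((nat \<Rightarrow> real) \<Rightarrow> nat set) \<Rightarrow> rnd list \<Rightarrow> rnd measure" where
  "cts_round m D Dtrig Oracle h =
     bind (PiM {..<m} (\<lambda>j. beta_measure (cts_a h j) (cts_b h j))) (\<lambda>\<theta>.
       bind (PiM {..<m} D) (\<lambda>X.
         measure_pmf (map_pmf (\<lambda>(S', Y). (Oracle \<theta>, S', Y)) (obs_pmf Dtrig (Oracle \<theta>) X))))"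

primrec cts_traj :: "nat \<Rightarrow> (nat \<Rightarrow> real measure) \<Rightarrow> (nat set \<Rightarrow> (nat \<Rightarrow> real) \<Rightarrow> nat set pmf)
    \<Rightarrow> ((nat \<Rightarrow> real) \<Rightarrow> nat set) \<Rightarrow> nat \<Rightarrow> rnd list measure" where
  "cts_traj m D Dtrig Oracle 0 = return (count_space UNIV) []"
| "cts_traj m D Dtrig Oracle (Suc n) =
     bind (cts_traj m D Dtrig Oracle n)
       (\<lambda>h. distr (cts_round m D Dtrig Oracle h) (count_space UNIV) (\<lambda>r. h @ [r]))"

definition ptrig :: "nat \<Rightarrow> (nat \<Rightarrow> real measure) \<Rightarrow> (nat set \<Rightarrow> (nat \<Rightarrow> real) \<Rightarrow> nat set pmf)
    \<Rightarrow> nat set \<Rightarrow> nat \<Rightarrow> real" where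
  "ptrig m D Dtrig S i = (\<integral>X. measure_pmf.prob (Dtrig S X) {S'. i \<in> S'} \<partial>(PiM {..<m} D))"

definition trigset :: "nat \<Rightarrow> (nat \<Rightarrow> real measure) \<Rightarrow> (nat set \<Rightarrow> (nat \<Rightarrow> real) \<Rightarrow> nat set pmf)
    \<Rightarrow> nat set \<Rightarrow> nat set" where
  "trigset m D Dtrig S = {i. ptrig m D Dtrig S i > 0}"

definition p_arm :: "nat \<Rightarrow> nat set set \<Rightarrow> (nat \<Rightarrow> real measure) \<Rightarrow> (nat set \<Rightarrow> (nat \<Rightarrow> real) \<Rightarrow> nat set pmf)
    \<Rightarrow> nat \<Rightarrow> real" where
  "p_arm m I D Dtrig i = Min {ptrig m D Dtrig S i | S. S \<in> I \<and> i \<in> trigset m D Dtrig S}"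

definition p_star :: "nat \<Rightarrow> nat set set \<Rightarrow> (nat \<Rightarrow> real measure) \<Rightarrow> (nat set \<Rightarrow> (nat \<Rightarrow> real) \<Rightarrow> nat set pmf)
    \<Rightarrow> real" where
  "p_star m I D Dtrig = Min (p_arm m I D Dtrig ` {..<m})"

text \<open>M_i(t) and N_i(t) computed from the history of the first t-1 rounds.\<close>
definition cnt_M :: "nat \<Rightarrow> (nat \<Rightarrow> real measure) \<Rightarrow> (nat set \<Rightarrow> (nat \<Rightarrow> real) \<Rightarrow> nat set pmf)
    \<Rightarrow> rnd list \<Rightarrow> nat \<Rightarrow> nat" where
  "cnt_M m D Dtrig h i = length (filter (\<lambda>(S, S', Y). i \<in> trigset m D Dtrig S) h)"

definition cnt_N :: "rnd list \<Rightarrow> nat \<Rightarrow> nat" where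
  "cnt_N h i = length (filter (\<lambda>(S, S', Y). i \<in> S') h)"

definition bad_count :: "nat \<Rightarrow> nat set set \<Rightarrow> (nat \<Rightarrow> real measure) \<Rightarrow> (nat set \<Rightarrow> (nat \<Rightarrow> real) \<Rightarrow> nat set pmf)
    \<Rightarrow> nat \<Rightarrow> real \<Rightarrow> rnd list \<Rightarrow> real" where
  "bad_count m I D Dtrig i \<rho> h = (\<Sum>k<length h.
      if i \<in> trigset m D Dtrig (fst (h ! k)) \<and>
         real (cnt_N (take k h) i) \<le> (1 - \<rho>) * p_arm m I D Dtrig i * real (cnt_M m D Dtrig (take k h) i)
      then 1 else 0)"

end

theory Submission
  imports Defs
begin

text \<open>Fix the arm \<open>i\<close>, write \<open>p\<close> for \<open>p_i\<close> and let the drift be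
  \<open>N_i(t) - (1 - \<rho>) p M_i(t)\<close>, so that a round is bad exactly when \<open>i\<close> is in the triggering
  set and the drift is \<open>\<le> 0\<close>. The potential \<open>#bad + K (1 - \<rho>)^drift\<close> with scale
  \<open>K = 1 / (1 - c)\<close>, \<open>c = (1 - \<rho> p) (1 - \<rho>)^(-(1 - \<rho>) p)\<close>, does not increase in
  expectation over a round: if \<open>i\<close> is not in the triggering set nothing bad happens and the drift
  can only grow; otherwise the drift moves by \<open>-(1 - \<rho>) p\<close> and then by \<open>+1\<close> with probability
  \<open>p_i^S \<ge> p\<close>, which shrinks the second term by the factor \<open>c\<close>, and the saved amount
  \<open>(1 - c) K (1 - \<rho>)^drift \<ge> 1\<close> pays for a bad round. Hence the expected number of bad rounds is
  at most the initial potential \<open>K\<close>, and \<open>ln c \<le> -\<rho>\<^sup>2 p / 2\<close> gives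
  \<open>K \<le> 1 + 2 / (\<rho>\<^sup>2 p)\<close>.\<close>

lemma one_minus_mult_ln_one_minus_ge:
  fixes x :: real
  assumes "0 \<le> x" "x < 1"
  shows "x\<^sup>2 / 2 - x \<le> (1 - x) * ln (1 - x)"
proof -
  let ?f = "\<lambda>x::real. (1 - x) * ln (1 - x) + x - x\<^sup>2 / 2"
  have "?f 0 \<le> ?f x"
  proof (rule DERIV_nonneg_imp_nondecreasing[OF assms(1)])
    fix y :: real assume y: "0 \<le> y" "y \<le> x"
    then have "y < 1" using assms by simp
    then have "(?f has_real_derivative (- ln (1 - y) - y)) (at y)"
      by (auto intro!: derivative_eq_intros)
    moreover have "0 \<le> - ln (1 - y) - y"
      using ln_le_minus_one[of "1 - y"] \<open>y < 1\<close> by simp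
    ultimately show "\<exists>d. (?f has_real_derivative d) (at y) \<and> 0 \<le> d" by blast
  qed
  then show ?thesis by simp
qed

definition decay_factor :: "real \<Rightarrow> real \<Rightarrow> real" where
  "decay_factor \<rho> p = (1 - \<rho> * p) * (1 - \<rho>) powr (- ((1 - \<rho>) * p))"

lemma decay_factor_le_exp:
  fixes \<rho> p :: real
  assumes "0 < \<rho>" "\<rho> < 1" "0 < p" "p \<le> 1"
  shows "decay_factor \<rho> p \<le> exp (- (p * \<rho>\<^sup>2 / 2))"
proof -
  have "\<rho> * p < 1" using assms by (smt (verit) mult_left_le mult_less_cancel_left1)
  then have pos: "0 < decay_factor \<rho> p" unfolding decay_factor_def using assms by simp
  have "ln (decay_factor \<rho> p) = ln (1 - \<rho> * p) - p * ((1 - \<rho>) * ln (1 - \<rho>))"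
    unfolding decay_factor_def using \<open>\<rho> * p < 1\<close> assms by (simp add: ln_mult)
  also have "\<dots> \<le> - (\<rho> * p) - p * (\<rho>\<^sup>2 / 2 - \<rho>)"
    using ln_le_minus_one[of "1 - \<rho> * p"] one_minus_mult_ln_one_minus_ge[of \<rho>] \<open>\<rho> * p < 1\<close> assms
    by (intro diff_mono mult_left_mono) auto
  also have "\<dots> = - (p * \<rho>\<^sup>2 / 2)" by (simp add: algebra_simps)
  finally show ?thesis
    using pos by (metis exp_le_cancel_iff exp_ln)
qed

lemma inverse_one_minus_exp_neg_le:
  fixes a :: real
  assumes "0 < a"
  shows "1 / (1 - exp (- a)) \<le> 1 + 1 / a"
proof -
  have "(1 + a) * exp (- a) \<le> 1"
    using exp_ge_add_one_self[of a] by (simp add: exp_minus field_simps)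
  then show ?thesis using assms by (simp add: field_simps)
qed

lemma
  fixes \<rho> p :: real
  assumes "0 < \<rho>" "\<rho> < 1" "0 < p" "p \<le> 1"
  shows decay_factor_less_1: "decay_factor \<rho> p < 1"
    and inverse_one_minus_decay_factor_le: "1 / (1 - decay_factor \<rho> p) \<le> 1 + 2 / (\<rho>\<^sup>2 * p)"
proof -
  define a where "a = p * \<rho>\<^sup>2 / 2"
  have "0 < a" unfolding a_def using assms by simp
  have c: "decay_factor \<rho> p \<le> exp (- a)" unfolding a_def by (rule decay_factor_le_exp[OF assms])
  have "exp (- a) < 1" using \<open>0 < a\<close> by simp
  with c show less: "decay_factor \<rho> p < 1" by linarith
  have "1 / (1 - decay_factor \<rho> p) \<le> 1 / (1 - exp (- a))"
    using c less \<open>exp (- a) < 1\<close> by (intro divide_left_mono mult_pos_pos) linarith+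
  also have "\<dots> \<le> 1 + 1 / a" by (rule inverse_one_minus_exp_neg_le[OF \<open>0 < a\<close>])
  also have "1 / a = 2 / (\<rho>\<^sup>2 * p)" unfolding a_def by simp
  finally show "1 / (1 - decay_factor \<rho> p) \<le> 1 + 2 / (\<rho>\<^sup>2 * p)" .
qed

lemma prob_space_beta_measure:
  assumes a: "1 \<le> a" and b: "1 \<le> b"
  shows "prob_space (beta_measure a b)"
proof -
  define C :: real where "C = fact (a + b - 1) / (fact (a - 1) * fact (b - 1))"
  have Gamma_nat: "Gamma (real n) = fact (n - 1)" if "1 \<le> n" for n
    using Gamma_fact[of "n - 1", where 'a=real] that by (simp add: of_nat_diff)
  have "C * Beta a b = 1"
    unfolding C_def Beta_def using Gamma_nat[OF a] Gamma_nat[OF b] Gamma_nat[of "a + b"] a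
    by simp
  moreover have "((\<lambda>t. t powr (real a - 1) * (1 - t) powr (real b - 1)) has_integral Beta a b) {0<..<1}"
    using has_integral_Beta_real[of a b] a b by (simp add: has_integral_Icc_iff_Ioo)
  ultimately have integral:
    "((\<lambda>t. C * (t powr (real a - 1) * (1 - t) powr (real b - 1))) has_integral 1) {0<..<1}"
    using has_integral_mult_right by metis
  have pdf: "ennreal (beta_pdf a b x)
      = ennreal (C * (x powr (real a - 1) * (1 - x) powr (real b - 1))) * indicator {0<..<1} x" for x
  proof (cases "0 < x \<and> x < 1")
    case True
    then have "x powr (real a - 1) = x ^ (a - 1)" "(1 - x) powr (real b - 1) = (1 - x) ^ (b - 1)"
      using a b by (simp_all add: powr_realpow[symmetric] of_nat_diff)
    with True show ?thesis unfolding beta_pdf_def C_def by (simp add: mult.assoc)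
  qed (auto simp: beta_pdf_def)
  have "C > 0" unfolding C_def by simp
  then have "(\<integral>\<^sup>+x. ennreal (beta_pdf a b x) \<partial>lborel) = 1"
    unfolding pdf by (subst nn_integral_has_integral_lebesgue'[OF _ integral]) auto
  then have "emeasure (beta_measure a b) (space (beta_measure a b)) = 1"
    unfolding beta_measure_def by (subst emeasure_density) (auto simp: beta_pdf_def)
  then show ?thesis by (rule prob_spaceI)
qed

definition fin_pmf_kernel_on :: "'a measure \<Rightarrow> 'b set \<Rightarrow> ('a \<Rightarrow> 'b pmf) \<Rightarrow> bool" where
  "fin_pmf_kernel_on L F p \<longleftrightarrow> finite F \<and> (\<forall>x\<in>space L. set_pmf (p x) \<subseteq> F) \<and>
     (\<forall>y. (\<lambda>x. pmf (p x) y) \<in> borel_measurable L)"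

definition fin_pmf_kernel :: "'a measure \<Rightarrow> ('a \<Rightarrow> 'b pmf) \<Rightarrow> bool" where
  "fin_pmf_kernel L p \<longleftrightarrow> (\<exists>F. fin_pmf_kernel_on L F p)"

lemma measurable_fin_pmf_kernel_on:
  assumes "fin_pmf_kernel_on L F p"
  shows "(\<lambda>x. measure_pmf (p x)) \<in> measurable L (subprob_algebra (count_space UNIV))"
proof (rule measurable_subprob_algebra)
  fix x assume "x \<in> space L"
  show "subprob_space (measure_pmf (p x))" by (rule subprob_space_measure_pmf)
next
  fix A :: "'b set"
  have F: "finite F" "\<And>x. x \<in> space L \<Longrightarrow> set_pmf (p x) \<subseteq> F"
    and [measurable]: "\<And>y. (\<lambda>x. pmf (p x) y) \<in> borel_measurable L"
    using assms unfolding fin_pmf_kernel_on_def by auto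
  have "emeasure (measure_pmf (p x)) A = (\<Sum>y\<in>A \<inter> F. ennreal (pmf (p x) y))"
    if "x \<in> space L" for x
  proof -
    have "A \<inter> set_pmf (p x) = (A \<inter> F) \<inter> set_pmf (p x)" using F(2)[OF that] by auto
    then have "emeasure (measure_pmf (p x)) A = emeasure (measure_pmf (p x)) (A \<inter> F)"
      by (metis emeasure_Int_set_pmf)
    then show ?thesis using F(1) by (simp add: emeasure_measure_pmf_finite)
  qed
  then show "(\<lambda>x. emeasure (measure_pmf (p x)) A) \<in> borel_measurable L"
    by (subst measurable_cong) measurable
qed simp

lemma measurable_fin_pmf_kernel:
  "fin_pmf_kernel L p \<Longrightarrow> (\<lambda>x. measure_pmf (p x)) \<in> measurable L (subprob_algebra (count_space UNIV))"
  unfolding fin_pmf_kernel_def using measurable_fin_pmf_kernel_on by blast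

lemma fin_pmf_kernel_on_mono:
  "fin_pmf_kernel_on L F p \<Longrightarrow> F \<subseteq> G \<Longrightarrow> finite G \<Longrightarrow> fin_pmf_kernel_on L G p"
  unfolding fin_pmf_kernel_on_def by blast

lemma fin_pmf_kernel_on_bind:
  assumes p: "fin_pmf_kernel_on L F p" and f: "\<And>y. y \<in> F \<Longrightarrow> fin_pmf_kernel_on L G (\<lambda>x. f x y)"
    and "finite G"
  shows "fin_pmf_kernel_on L G (\<lambda>x. bind_pmf (p x) (f x))"
proof -
  have F: "finite F" "\<And>x. x \<in> space L \<Longrightarrow> set_pmf (p x) \<subseteq> F"
    "\<And>y. (\<lambda>x. pmf (p x) y) \<in> borel_measurable L"
    using p unfolding fin_pmf_kernel_on_def by auto
  have G: "\<And>x y. y \<in> F \<Longrightarrow> x \<in> space L \<Longrightarrow> set_pmf (f x y) \<subseteq> G"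
    "\<And>y z. y \<in> F \<Longrightarrow> (\<lambda>x. pmf (f x y) z) \<in> borel_measurable L"
    using f unfolding fin_pmf_kernel_on_def by auto
  have "pmf (bind_pmf (p x) (f x)) z = (\<Sum>y\<in>F. pmf (p x) y * pmf (f x y) z)"
    if "x \<in> space L" for x z
    unfolding pmf_bind using F(2)[OF that] by (subst integral_measure_pmf[OF F(1)]) auto
  then have "(\<lambda>x. pmf (bind_pmf (p x) (f x)) z) \<in> borel_measurable L" for z
    by (subst measurable_cong) (auto intro!: borel_measurable_sum borel_measurable_times F(3) G(2))
  moreover have "set_pmf (bind_pmf (p x) (f x)) \<subseteq> G" if "x \<in> space L" for x
    using F(2)[OF that] G(1)[OF _ that] by auto
  ultimately show ?thesis unfolding fin_pmf_kernel_on_def using \<open>finite G\<close> by blast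
qed

lemma fin_pmf_kernel_bind_on:
  assumes p: "fin_pmf_kernel_on L F p" and f: "\<And>y. y \<in> F \<Longrightarrow> fin_pmf_kernel L (\<lambda>x. f x y)"
  shows "fin_pmf_kernel L (\<lambda>x. bind_pmf (p x) (f x))"
proof -
  obtain G where G: "\<And>y. y \<in> F \<Longrightarrow> fin_pmf_kernel_on L (G y) (\<lambda>x. f x y)"
    using f unfolding fin_pmf_kernel_def by metis
  have "finite F" using p unfolding fin_pmf_kernel_on_def by simp
  then have "finite (\<Union>y\<in>F. G y)" using G by (auto simp: fin_pmf_kernel_on_def)
  then have "fin_pmf_kernel_on L (\<Union>y\<in>F. G y) (\<lambda>x. f x y)" if "y \<in> F" for y
    using G that by (blast intro: fin_pmf_kernel_on_mono)
  then show ?thesis unfolding fin_pmf_kernel_def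
    using fin_pmf_kernel_on_bind[OF p] \<open>finite (\<Union>y\<in>F. G y)\<close> by blast
qed

lemma fin_pmf_kernel_bind:
  "fin_pmf_kernel L p \<Longrightarrow> (\<And>y. fin_pmf_kernel L (\<lambda>x. f x y)) \<Longrightarrow> fin_pmf_kernel L (\<lambda>x. bind_pmf (p x) (f x))"
  unfolding fin_pmf_kernel_def[of L p] using fin_pmf_kernel_bind_on by blast

lemma fin_pmf_kernel_return: "fin_pmf_kernel L (\<lambda>_. return_pmf c)"
  unfolding fin_pmf_kernel_def fin_pmf_kernel_on_def by (intro exI[of _ "{c}"]) auto

lemma fin_pmf_kernel_map: "fin_pmf_kernel L p \<Longrightarrow> fin_pmf_kernel L (\<lambda>x. map_pmf g (p x))"
  unfolding map_pmf_def by (intro fin_pmf_kernel_bind fin_pmf_kernel_return)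

lemma fin_pmf_kernel_pair:
  "fin_pmf_kernel L p \<Longrightarrow> fin_pmf_kernel L q \<Longrightarrow> fin_pmf_kernel L (\<lambda>x. pair_pmf (p x) (q x))"
  unfolding pair_pmf_def by (intro fin_pmf_kernel_bind fin_pmf_kernel_return)

text \<open>Unlike \<open>pmf_bernoulli_True\<close>, this holds for parameters outside [0,1], which are clamped.\<close>
lemma pmf_bernoulli_pmf:
  "pmf (bernoulli_pmf q) b = (if b then min 1 (max 0 q) else 1 - min 1 (max 0 q))"
  by (simp add: bernoulli_pmf.rep_eq)

lemma fin_pmf_kernel_bernoulli:
  assumes [measurable]: "q \<in> borel_measurable L"
  shows "fin_pmf_kernel L (\<lambda>x. bernoulli_pmf (q x))"
  unfolding fin_pmf_kernel_def fin_pmf_kernel_on_def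
  by (intro exI[of _ UNIV]) (auto simp: pmf_bernoulli_pmf)

lemma fin_pmf_kernel_Pi_bernoulli:
  assumes "finite A" "\<And>j. j \<in> A \<Longrightarrow> (\<lambda>x. q x j) \<in> borel_measurable L"
  shows "fin_pmf_kernel L (\<lambda>x. Pi_pmf A d (\<lambda>j. bernoulli_pmf (q x j)))"
  using assms
proof (induction A rule: finite_induct)
  case empty
  then show ?case by (simp add: fin_pmf_kernel_return)
next
  case (insert a A)
  then show ?case
    by (subst Pi_pmf_insert[OF insert(1,2)])
      (intro fin_pmf_kernel_map fin_pmf_kernel_pair fin_pmf_kernel_bernoulli; simp)
qed

lemma (in prob_space) nn_integral_affine_eq:
  fixes g :: "'a \<Rightarrow> real"
  assumes g: "g \<in> borel_measurable M" "\<And>x. x \<in> space M \<Longrightarrow> 0 \<le> g x \<and> g x \<le> 1"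
    and ab: "0 \<le> a" "0 \<le> a + b"
  shows "(\<integral>\<^sup>+x. ennreal (a + b * g x) \<partial>M) = ennreal (a + b * expectation g)"
proof -
  have nonneg: "0 \<le> a + b * g x" if "x \<in> space M" for x
  proof -
    have "a + b * g x = (1 - g x) * a + g x * (a + b)" by (simp add: algebra_simps)
    then show ?thesis using g(2)[OF that] ab by simp
  qed
  have int_g: "integrable M g"
    by (rule integrable_const_bound[where B=1]) (use g in auto)
  have "(\<integral>\<^sup>+x. ennreal (a + b * g x) \<partial>M) = ennreal (\<integral>x. a + b * g x \<partial>M)"
    using nonneg int_g by (intro nn_integral_eq_integral) auto
  also have "(\<integral>x. a + b * g x \<partial>M) = a + b * expectation g"
    using int_g by (simp add: prob_space)
  finally show ?thesis .
qed

lemma nn_integral_obs_pmf_fst: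
  "(\<integral>\<^sup>+z. f (fst z) \<partial>obs_pmf Dtrig S X) = (\<integral>\<^sup>+S'. f S' \<partial>Dtrig S X)"
  unfolding obs_pmf_def nn_integral_bind_pmf nn_integral_map_pmf
  by (simp add: measure_pmf.emeasure_space_1)

locale cmab =
  fixes m :: nat and I :: "nat set set" and D :: "nat \<Rightarrow> real measure"
    and Dtrig :: "nat set \<Rightarrow> (nat \<Rightarrow> real) \<Rightarrow> nat set pmf"
    and Oracle :: "(nat \<Rightarrow> real) \<Rightarrow> nat set"
  assumes I_fin: "finite I"
    and D: "\<And>j. j < m \<Longrightarrow> prob_space (D j) \<and> sets (D j) = sets borel"
    and trig: "\<And>S X. S \<in> I \<Longrightarrow> set_pmf (Dtrig S X) \<subseteq> Pow {..<m}"
    and trig_meas: "\<And>S. S \<in> I \<Longrightarrow> (\<lambda>X. measure_pmf (Dtrig S X))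
                      \<in> measurable (PiM {..<m} (\<lambda>_. borel)) (subprob_algebra (count_space UNIV))"
    and orc: "\<And>\<theta>. Oracle \<theta> \<in> I"
    and orc_meas: "Oracle \<in> measurable (PiM {..<m} (\<lambda>_. borel)) (count_space UNIV)"
begin

abbreviation outcomes :: "(nat \<Rightarrow> real) measure" where
  "outcomes \<equiv> PiM {..<m} D"

abbreviation posterior :: "rnd list \<Rightarrow> (nat \<Rightarrow> real) measure" where
  "posterior h \<equiv> PiM {..<m} (\<lambda>j. beta_measure (cts_a h j) (cts_b h j))"

definition play :: "nat set \<Rightarrow> rnd measure" where
  "play S = outcomes \<bind> (\<lambda>X. measure_pmf (map_pmf (\<lambda>(S', Y). (S, S', Y)) (obs_pmf Dtrig S X)))"

lemma cts_round_eq_bind_play: "cts_round m D Dtrig Oracle h = posterior h \<bind> (\<lambda>\<theta>. play (Oracle \<theta>))"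
  unfolding cts_round_def play_def ..

lemma prob_space_outcomes: "prob_space outcomes"
  using D by (intro prob_space_PiM) auto

lemma sets_outcomes: "sets outcomes = sets (PiM {..<m} (\<lambda>_. borel))"
  using D by (intro sets_PiM_cong) auto

lemma prob_space_posterior: "prob_space (posterior h)"
  by (intro prob_space_PiM prob_space_beta_measure) (auto simp: cts_a_def cts_b_def)

lemma sets_posterior: "sets (posterior h) = sets (PiM {..<m} (\<lambda>_. borel))"
  by (intro sets_PiM_cong) (auto simp: beta_measure_def)

lemma measurable_trig_outcomes:
  "S \<in> I \<Longrightarrow> (\<lambda>X. measure_pmf (Dtrig S X)) \<in> measurable outcomes (subprob_algebra (count_space UNIV))"
  using trig_meas by (subst measurable_cong_sets[OF sets_outcomes refl]) auto

lemma fin_pmf_kernel_obs_pmf: "S \<in> I \<Longrightarrow> fin_pmf_kernel outcomes (obs_pmf Dtrig S)"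
proof -
  assume S: "S \<in> I"
  have "fin_pmf_kernel_on outcomes (Pow {..<m}) (Dtrig S)"
    unfolding fin_pmf_kernel_on_def measure_pmf_single[symmetric]
    using trig[OF S] measurable_compose[OF measurable_trig_outcomes[OF S] measurable_measure_subprob_algebra]
    by auto
  moreover have "(\<lambda>X. X j) \<in> borel_measurable outcomes" if "j < m" for j
    using that by (subst measurable_cong_sets[OF sets_outcomes refl]) auto
  ultimately show ?thesis
    unfolding obs_pmf_def
    by (intro fin_pmf_kernel_bind_on fin_pmf_kernel_map fin_pmf_kernel_Pi_bernoulli)
      (auto intro: finite_subset)
qed

lemma measurable_obs:
  "S \<in> I \<Longrightarrow> (\<lambda>X. measure_pmf (map_pmf g (obs_pmf Dtrig S X))) \<in> measurable outcomes (subprob_algebra (count_space UNIV))"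
  by (intro measurable_fin_pmf_kernel fin_pmf_kernel_map fin_pmf_kernel_obs_pmf)

lemma play_in_subprob: "S \<in> I \<Longrightarrow> play S \<in> space (subprob_algebra (count_space UNIV))"
proof -
  assume S: "S \<in> I"
  interpret outcomes: prob_space outcomes by (rule prob_space_outcomes)
  have "subprob_space (play S)"
    unfolding play_def by (rule subprob_space_bind[OF _ measurable_obs[OF S]]) unfold_locales
  moreover have "sets (play S) = sets (count_space UNIV)"
    unfolding play_def by (rule sets_bind[OF _ outcomes.not_empty]) simp
  ultimately show ?thesis by (simp add: space_subprob_algebra)
qed

lemma measurable_play_Oracle:
  "(\<lambda>\<theta>. play (Oracle \<theta>)) \<in> measurable (posterior h) (subprob_algebra (count_space UNIV))"
proof -
  have "Oracle -` {S} \<inter> space (posterior h) \<in> sets (posterior h)" for S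
    using measurable_sets[OF orc_meas, of "{S}"]
    by (simp add: sets_posterior cong: sets_eq_imp_space_eq[OF sets_posterior])
  then have "Oracle \<in> measurable (posterior h) (count_space I)"
    using orc by (simp add: measurable_count_space_eq2[OF I_fin])
  moreover have "play \<in> measurable (count_space I) (subprob_algebra (count_space UNIV))"
    using play_in_subprob by simp
  ultimately show ?thesis by (rule measurable_compose)
qed

lemma cts_round_in_subprob: "cts_round m D Dtrig Oracle h \<in> space (subprob_algebra (count_space UNIV))"
proof -
  interpret posterior: prob_space "posterior h" by (rule prob_space_posterior)
  have "subprob_space (cts_round m D Dtrig Oracle h)"
    unfolding cts_round_eq_bind_play
    by (rule subprob_space_bind[OF _ measurable_play_Oracle]) unfold_locales
  moreover have "sets (cts_round m D Dtrig Oracle h) = sets (count_space UNIV)"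
    unfolding cts_round_eq_bind_play
    by (rule sets_bind[OF _ posterior.not_empty]) (use play_in_subprob orc in \<open>auto simp: space_subprob_algebra\<close>)
  ultimately show ?thesis by (simp add: space_subprob_algebra)
qed

lemma sets_cts_traj: "sets (cts_traj m D Dtrig Oracle T) = sets (count_space UNIV)"
proof (induction T)
  case (Suc T)
  then have "space (cts_traj m D Dtrig Oracle T) = UNIV"
    by (metis sets_eq_imp_space_eq space_count_space)
  then show ?case by (simp only: cts_traj.simps, intro sets_bind) auto
qed simp

lemma measurable_append_round:
  "(\<lambda>r. h @ [r]) \<in> measurable (cts_round m D Dtrig Oracle h) (count_space UNIV)"
proof -
  have sets: "sets (cts_round m D Dtrig Oracle h) = sets (count_space UNIV)"
    using cts_round_in_subprob by (simp add: space_subprob_algebra)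
  show ?thesis by (subst measurable_cong_sets[OF sets refl]) simp
qed

lemma nn_integral_cts_traj_le:
  assumes step: "\<And>h. (\<integral>\<^sup>+r. f (h @ [r]) \<partial>cts_round m D Dtrig Oracle h) \<le> f h"
  shows "(\<integral>\<^sup>+h. f h \<partial>cts_traj m D Dtrig Oracle T) \<le> f []"
proof (induction T)
  case 0
  then show ?case by (simp add: nn_integral_return)
next
  case (Suc T)
  let ?k = "\<lambda>h. distr (cts_round m D Dtrig Oracle h) (count_space UNIV) (\<lambda>r. h @ [r])"
  have "?k h \<in> space (subprob_algebra (count_space UNIV))" for h
    using cts_round_in_subprob measurable_append_round
    by (auto simp: space_subprob_algebra intro: subprob_space.subprob_space_distr)
  then have kernel: "?k \<in> measurable (cts_traj m D Dtrig Oracle T) (subprob_algebra (count_space UNIV))"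
    by (subst measurable_cong_sets[OF sets_cts_traj refl]) simp
  have "(\<integral>\<^sup>+h. f h \<partial>cts_traj m D Dtrig Oracle (Suc T))
      = (\<integral>\<^sup>+h. \<integral>\<^sup>+x. f x \<partial>?k h \<partial>cts_traj m D Dtrig Oracle T)"
    by (simp only: cts_traj.simps, rule nn_integral_bind[OF _ kernel]) simp
  also have "\<dots> = (\<integral>\<^sup>+h. \<integral>\<^sup>+r. f (h @ [r]) \<partial>cts_round m D Dtrig Oracle h \<partial>cts_traj m D Dtrig Oracle T)"
    using measurable_append_round by (intro nn_integral_cong nn_integral_distr) auto
  also have "\<dots> \<le> (\<integral>\<^sup>+h. f h \<partial>cts_traj m D Dtrig Oracle T)"
    by (intro nn_integral_mono step)
  finally show ?case using Suc by simp
qed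

lemma measurable_trigger_prob:
  "S \<in> I \<Longrightarrow> (\<lambda>X. measure_pmf.prob (Dtrig S X) A) \<in> borel_measurable outcomes"
  by (rule measurable_compose[OF measurable_trig_outcomes measurable_measure_subprob_algebra]) auto

lemma ptrig_le_1: "S \<in> I \<Longrightarrow> ptrig m D Dtrig S i \<le> 1"
proof -
  assume S: "S \<in> I"
  interpret outcomes: prob_space outcomes by (rule prob_space_outcomes)
  have "(\<integral>X. measure_pmf.prob (Dtrig S X) {S'. i \<in> S'} \<partial>outcomes) \<le> (\<integral>X. 1 \<partial>outcomes)"
    by (intro integral_mono outcomes.integrable_const_bound[where B=1] measurable_trigger_prob[OF S]) auto
  then show ?thesis by (simp add: ptrig_def outcomes.prob_space)
qed

lemma nn_integral_trigger_affine_eq: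
  assumes S: "S \<in> I" and ab: "0 \<le> a" "0 \<le> a + b"
  shows "(\<integral>\<^sup>+X. \<integral>\<^sup>+z. ennreal (a + b * of_bool (i \<in> fst z)) \<partial>obs_pmf Dtrig S X \<partial>outcomes)
         = ennreal (a + b * ptrig m D Dtrig S i)"
proof -
  interpret outcomes: prob_space outcomes by (rule prob_space_outcomes)
  have inner: "(\<integral>\<^sup>+z. ennreal (a + b * of_bool (i \<in> fst z)) \<partial>obs_pmf Dtrig S X)
      = ennreal (a + b * measure_pmf.prob (Dtrig S X) {S'. i \<in> S'})" for X
  proof -
    have "(\<integral>\<^sup>+S'. ennreal (a + b * indicator {S'. i \<in> S'} S') \<partial>Dtrig S X)
        = ennreal (a + b * measure_pmf.expectation (Dtrig S X) (indicator {S'. i \<in> S'}))"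
      using ab by (intro measure_pmf.nn_integral_affine_eq) auto
    then show ?thesis
      by (simp add: nn_integral_obs_pmf_fst[where f = "\<lambda>S'. ennreal (a + b * of_bool (i \<in> S'))"]
          indicator_def)
  qed
  have "(\<integral>\<^sup>+X. ennreal (a + b * measure_pmf.prob (Dtrig S X) {S'. i \<in> S'}) \<partial>outcomes)
      = ennreal (a + b * ptrig m D Dtrig S i)"
    unfolding ptrig_def using ab
    by (intro outcomes.nn_integral_affine_eq measurable_trigger_prob[OF S]) auto
  then show ?thesis by (simp only: inner)
qed

end

lemma cnt_N_snoc: "cnt_N (h @ [(S, S', Y)]) i = cnt_N h i + of_bool (i \<in> S')"
  unfolding cnt_N_def by simp

lemma cnt_M_snoc:
  "cnt_M m D Dtrig (h @ [(S, S', Y)]) i = cnt_M m D Dtrig h i + of_bool (i \<in> trigset m D Dtrig S)"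
  unfolding cnt_M_def by simp

lemma bad_count_snoc:
  "bad_count m I D Dtrig i \<rho> (h @ [(S, S', Y)]) = bad_count m I D Dtrig i \<rho> h +
    of_bool (i \<in> trigset m D Dtrig S \<and>
      real (cnt_N h i) \<le> (1 - \<rho>) * p_arm m I D Dtrig i * real (cnt_M m D Dtrig h i))"
  unfolding bad_count_def by (simp add: sum.lessThan_Suc nth_append take_append)

lemma bad_count_nonneg: "0 \<le> bad_count m I D Dtrig i \<rho> h"
  unfolding bad_count_def by (intro sum_nonneg) auto

locale cts_arm = cmab +
  fixes i :: nat and \<rho> :: real
  assumes rho: "0 < \<rho>" "\<rho> < 1"
    and arm_triggerable: "\<exists>S\<in>I. i \<in> trigset m D Dtrig S"
    and p_arm_pos: "0 < p_arm m I D Dtrig i"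
begin

abbreviation p :: real where
  "p \<equiv> p_arm m I D Dtrig i"

lemma p_arm_le_ptrig: "S \<in> I \<Longrightarrow> i \<in> trigset m D Dtrig S \<Longrightarrow> p \<le> ptrig m D Dtrig S i"
  unfolding p_arm_def using I_fin by (intro Min_le) auto

lemma p_arm_le_1: "p \<le> 1"
  using arm_triggerable p_arm_le_ptrig ptrig_le_1 by (meson order.trans)

definition scale :: real where
  "scale = 1 / (1 - decay_factor \<rho> p)"

definition drift :: "rnd list \<Rightarrow> real" where
  "drift h = real (cnt_N h i) - (1 - \<rho>) * p * real (cnt_M m D Dtrig h i)"

definition potential :: "rnd list \<Rightarrow> real" where
  "potential h = bad_count m I D Dtrig i \<rho> h + scale * (1 - \<rho>) powr drift h"

lemma scale_pos: "0 < scale"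
  using decay_factor_less_1[OF rho p_arm_pos p_arm_le_1] unfolding scale_def by simp

lemma scale_le: "scale \<le> 1 + 2 / (\<rho>\<^sup>2 * p)"
  using inverse_one_minus_decay_factor_le[OF rho p_arm_pos p_arm_le_1] unfolding scale_def .

lemma potential_Nil: "potential [] = scale"
  unfolding potential_def drift_def bad_count_def cnt_N_def cnt_M_def using rho by simp

lemma potential_snoc:
  "potential (h @ [(S, S', Y)]) = bad_count m I D Dtrig i \<rho> h +
     of_bool (i \<in> trigset m D Dtrig S \<and> drift h \<le> 0) +
     scale * (1 - \<rho>) powr (drift h - of_bool (i \<in> trigset m D Dtrig S) * ((1 - \<rho>) * p))
       * (1 - \<rho> * of_bool (i \<in> S'))"
proof -
  have "drift (h @ [(S, S', Y)])
      = (drift h - of_bool (i \<in> trigset m D Dtrig S) * ((1 - \<rho>) * p)) + of_bool (i \<in> S')"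
    unfolding drift_def cnt_N_snoc cnt_M_snoc by (simp add: algebra_simps)
  then show ?thesis
    using rho unfolding potential_def bad_count_snoc
    by (auto simp: powr_add drift_def)
qed

lemma triggered_increment_le:
  assumes "p \<le> q"
  shows "of_bool (e \<le> 0) + scale * (1 - \<rho>) powr (e - (1 - \<rho>) * p) * (1 - \<rho> * q)
           \<le> scale * (1 - \<rho>) powr e"
proof -
  define u where "u = (1 - \<rho>) powr e"
  define w where "w = (1 - \<rho>) powr (- ((1 - \<rho>) * p))"
  have "of_bool (e \<le> 0) \<le> u"
    unfolding u_def using rho powr_mono'[of e 0 "1 - \<rho>"] by auto
  moreover have "(1 - \<rho>) powr (e - (1 - \<rho>) * p) = u * w"
    unfolding u_def w_def by (simp add: powr_add[symmetric])
  moreover have "scale * (u * w) * (1 - \<rho> * q) \<le> scale * (u * w) * (1 - \<rho> * p)"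
    using assms rho scale_pos unfolding u_def w_def by (intro mult_left_mono) auto
  ultimately have "of_bool (e \<le> 0) + scale * (1 - \<rho>) powr (e - (1 - \<rho>) * p) * (1 - \<rho> * q)
      \<le> u * (1 + scale * decay_factor \<rho> p)"
    unfolding decay_factor_def w_def by (simp add: algebra_simps)
  also have "1 + scale * decay_factor \<rho> p = scale"
    using decay_factor_less_1[OF rho p_arm_pos p_arm_le_1] unfolding scale_def by (simp add: field_simps)
  finally show ?thesis unfolding u_def by (simp add: mult.commute)
qed

lemma nn_integral_potential_play_le:
  assumes S: "S \<in> I"
  shows "(\<integral>\<^sup>+X. \<integral>\<^sup>+z. ennreal (potential (h @ [(S, fst z, snd z)])) \<partial>obs_pmf Dtrig S X \<partial>outcomes)
         \<le> ennreal (potential h)"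
proof -
  let ?trig = "i \<in> trigset m D Dtrig S"
  define a where "a = bad_count m I D Dtrig i \<rho> h + of_bool (?trig \<and> drift h \<le> 0)"
  define w where "w = scale * (1 - \<rho>) powr (drift h - of_bool ?trig * ((1 - \<rho>) * p))"
  define q where "q = ptrig m D Dtrig S i"
  have "0 \<le> a" unfolding a_def using bad_count_nonneg by simp
  have "0 \<le> w" unfolding w_def using scale_pos by simp
  have "potential (h @ [(S, fst z, snd z)]) = (a + w) + (- \<rho> * w) * of_bool (i \<in> fst z)" for z
    unfolding potential_snoc a_def w_def by (simp add: algebra_simps)
  moreover have "0 \<le> a + w + - \<rho> * w"
    using \<open>0 \<le> a\<close> \<open>0 \<le> w\<close> rho mult_left_le_one_le[of w \<rho>] by simp
  ultimately have expectation: "(\<integral>\<^sup>+X. \<integral>\<^sup>+z. ennreal (potential (h @ [(S, fst z, snd z)])) \<partial>obs_pmf Dtrig S X \<partial>outcomes)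
      = ennreal (a + w - \<rho> * w * q)"
    using nn_integral_trigger_affine_eq[OF S, of "a + w" "- \<rho> * w" i] \<open>0 \<le> a\<close> \<open>0 \<le> w\<close>
    unfolding q_def by simp
  have "a + w - \<rho> * w * q \<le> potential h"
  proof (cases ?trig)
    case True
    then have "of_bool (drift h \<le> 0) + w * (1 - \<rho> * q) \<le> scale * (1 - \<rho>) powr drift h"
      using triggered_increment_le[OF p_arm_le_ptrig[OF S True]] unfolding w_def q_def by simp
    with True show ?thesis unfolding potential_def a_def by (simp add: algebra_simps)
  next
    case False
    have "0 \<le> ptrig m D Dtrig S i"
      unfolding ptrig_def by (intro integral_nonneg_AE) simp
    with False \<open>0 \<le> w\<close> rho show ?thesis
      unfolding potential_def a_def w_def q_def by simp
  qed
  then show ?thesis unfolding expectation by (rule ennreal_leI)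
qed

lemma nn_integral_potential_cts_round_le:
  "(\<integral>\<^sup>+r. ennreal (potential (h @ [r])) \<partial>cts_round m D Dtrig Oracle h) \<le> ennreal (potential h)"
proof -
  interpret posterior: prob_space "posterior h" by (rule prob_space_posterior)
  have "(\<integral>\<^sup>+r. ennreal (potential (h @ [r])) \<partial>play S) \<le> ennreal (potential h)" if S: "S \<in> I" for S
  proof -
    have "(\<integral>\<^sup>+r. ennreal (potential (h @ [r])) \<partial>play S)
        = (\<integral>\<^sup>+X. \<integral>\<^sup>+z. ennreal (potential (h @ [(S, fst z, snd z)])) \<partial>obs_pmf Dtrig S X \<partial>outcomes)"
      unfolding play_def by (subst nn_integral_bind[OF _ measurable_obs[OF S]]) (simp_all add: case_prod_beta)
    then show ?thesis using nn_integral_potential_play_le[OF S] by simp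
  qed
  then have "(\<integral>\<^sup>+\<theta>. \<integral>\<^sup>+r. ennreal (potential (h @ [r])) \<partial>play (Oracle \<theta>) \<partial>posterior h)
      \<le> (\<integral>\<^sup>+\<theta>. ennreal (potential h) \<partial>posterior h)"
    using orc by (intro nn_integral_mono) blast
  then show ?thesis
    unfolding cts_round_eq_bind_play
    by (subst nn_integral_bind[OF _ measurable_play_Oracle]) (simp_all add: posterior.emeasure_space_1)
qed

lemma expected_bad_count_le:
  "(\<integral>h. bad_count m I D Dtrig i \<rho> h \<partial>cts_traj m D Dtrig Oracle T) \<le> 1 + 2 / (\<rho>\<^sup>2 * p)"
proof -
  have "(\<integral>\<^sup>+h. ennreal (bad_count m I D Dtrig i \<rho> h) \<partial>cts_traj m D Dtrig Oracle T)
      \<le> (\<integral>\<^sup>+h. ennreal (potential h) \<partial>cts_traj m D Dtrig Oracle T)"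
    using scale_pos by (intro nn_integral_mono ennreal_leI) (simp add: potential_def)
  also have "\<dots> \<le> ennreal scale"
    using nn_integral_cts_traj_le[OF nn_integral_potential_cts_round_le] by (simp add: potential_Nil)
  finally have "(\<integral>h. bad_count m I D Dtrig i \<rho> h \<partial>cts_traj m D Dtrig Oracle T) \<le> scale"
    using scale_pos by (intro integral_real_bounded) auto
  with scale_le show ?thesis by simp
qed

end

theorem lemma1:
  fixes m :: nat and I :: "nat set set" and D :: "nat \<Rightarrow> real measure"
    and Dtrig :: "nat set \<Rightarrow> (nat \<Rightarrow> real) \<Rightarrow> nat set pmf"
    and r :: "nat set \<Rightarrow> (nat \<Rightarrow> real) \<Rightarrow> real"
    and Oracle :: "(nat \<Rightarrow> real) \<Rightarrow> nat set"
    and i T :: nat and \<rho> :: real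
  assumes I_fin: "finite I" and I_ne: "I \<noteq> {}" and I_sub: "\<forall>S\<in>I. S \<subseteq> {..<m}"
    and D: "\<forall>j<m. prob_space (D j) \<and> sets (D j) = sets borel \<and> emeasure (D j) {0..1} = 1"
    and trig: "\<forall>S\<in>I. \<forall>X. set_pmf (Dtrig S X) \<subseteq> {S'. S \<subseteq> S' \<and> S' \<subseteq> {..<m}}"
    and trig_meas: "\<forall>S\<in>I. (\<lambda>X. measure_pmf (Dtrig S X))
                      \<in> measurable (PiM {..<m} (\<lambda>_. borel)) (subprob_algebra (count_space UNIV))"
    and orc: "\<forall>\<theta>. Oracle \<theta> \<in> I \<and> (\<forall>S\<in>I. r S \<theta> \<le> r (Oracle \<theta>) \<theta>)"
    and orc_meas: "Oracle \<in> measurable (PiM {..<m} (\<lambda>_. borel)) (count_space UNIV)"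
    and trig_all: "\<forall>j<m. \<exists>S\<in>I. j \<in> trigset m D Dtrig S"
    and pstar_pos: "p_star m I D Dtrig > 0"
    and i: "i < m" and rho: "0 < \<rho>" "\<rho> < 1"
  shows "(\<integral>h. bad_count m I D Dtrig i \<rho> h \<partial>(cts_traj m D Dtrig Oracle T))
           \<le> 1 + 2 / (\<rho>\<^sup>2 * p_star m I D Dtrig)"
proof -
  have "p_star m I D Dtrig \<le> p_arm m I D Dtrig i"
    unfolding p_star_def using i by (intro Min_le) auto
  then interpret cts_arm m I D Dtrig Oracle i \<rho>
    using I_fin D trig trig_meas orc orc_meas trig_all i rho pstar_pos by unfold_locales fastforce+
  have "(\<integral>h. bad_count m I D Dtrig i \<rho> h \<partial>cts_traj m D Dtrig Oracle T) \<le> 1 + 2 / (\<rho>\<^sup>2 * p)"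
    by (rule expected_bad_count_le)
  also have "2 / (\<rho>\<^sup>2 * p) \<le> 2 / (\<rho>\<^sup>2 * p_star m I D Dtrig)"
    using rho pstar_pos \<open>p_star m I D Dtrig \<le> p\<close> by (intro divide_left_mono mult_left_mono mult_pos_pos) auto
  finally show ?thesis by simp
qed

end
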